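(* Let $\mathbb{F}\in\{\mathbb{R},\mathbb{C}\}$, let $A$ be an $n\times m$ matrix over $\mathbb{F}$, and let $p\in[1,\infty)$, $q\in(1,\infty]$. Then $A\in\mathcal{E}_{\infty,1}(p,q)$ if and only if there is a vector $v\in\mathbb{F}^m$ such that (i) $v$ is an eigenvector of $A^*A$; (ii) all entries of $v$ have absolute value $1$; (iii) all entries of $Av$ have the same absolute value $\tau$; and (iv) $\tau=m^{1/p}n^{-1/q}\|A\|_{p,q}$. In particular, $A\in\mathcal{E}_{\infty,1}(2,2)$ if and only if $A^*A$ has an eigenvector $v$ with properties (ii) and (iii) which corresponds to its largest eigenvalue.
   Context: $\|x\|_p$ is the Hölder $\ell_p$ norm; $\|A\|_{p,q}=\max_{x\in\mathbb{F}^m,x\ne0}\|Ax\|_q/\|x\|_p$ (for real $A$ one may use $\mathbb{F}=\mathbb{R}$ or $\mathbb{C}$, all vectors being taken over the chosen field); $1/\infty=0$; $A^*$ is the conjugate transpose. For $p\in[1,\infty)$, $q\in(1,\infty]$, $\mathcal{E}_{\infty,1}(p,q)$ is the set of $n\times m$ matrices $A$ with $\|A\|_{r,s}=m^{(1/p)-(1/r)}n^{(1/s)-(1/q)}\|A\|_{p,q}$ for all $r\in(p,\infty]$ and $s\in[1,q)$. *)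

theory Defs
  imports "HOL-Analysis.Analysis"
begin

text \<open>Exponents live in the extended reals so that \<open>\<infinity>\<close> is allowed.
  \<open>inv_exp p\<close> is \<open>1/p\<close> with the convention \<open>1/\<infinity> = 0\<close>.\<close>
definition inv_exp :: "ereal \<Rightarrow> real" where
  "inv_exp p = (if p = \<infinity> then 0 else 1 / real_of_ereal p)"

definition lp_norm :: "ereal \<Rightarrow> ('a::real_normed_vector)^'n \<Rightarrow> real" where
  "lp_norm p x = (if p = \<infinity> then Max (range (\<lambda>i. norm (x $ i)))
                  else (\<Sum>i\<in>UNIV. norm (x $ i) powr real_of_ereal p) powr (1 / real_of_ereal p))"

definition op_norm :: "ereal \<Rightarrow> ereal \<Rightarrow> ('a::real_normed_field)^'m^'n \<Rightarrow> real" where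
  "op_norm p q A = Sup {lp_norm q (A *v x) / lp_norm p x | x. x \<noteq> 0}"

definition E_inf1 :: "ereal \<Rightarrow> ereal \<Rightarrow> ('a::real_normed_field)^'m^'n \<Rightarrow> bool" where
  "E_inf1 p q A \<longleftrightarrow>
     (\<forall>r s. p < r \<and> r \<le> \<infinity> \<and> 1 \<le> s \<and> s < q \<longrightarrow>
        op_norm r s A = real CARD('m) powr (inv_exp p - inv_exp r)
                        * real CARD('n) powr (inv_exp s - inv_exp q) * op_norm p q A)"

text \<open>Conjugate transpose of a complex matrix (for real matrices we use \<open>transpose\<close>).\<close>
definition cadjoint :: "complex^'m^'n \<Rightarrow> complex^'n^'m" where
  "cadjoint A = (\<chi> i j. cnj (A $ j $ i))"

definition is_eigvec :: "('a::field)^'m^'m \<Rightarrow> 'a^'m \<Rightarrow> bool" where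
  "is_eigvec M v \<longleftrightarrow> v \<noteq> 0 \<and> (\<exists>c. M *v v = c *s v)"

end

(* The power-mean inequality gives ||A||_{r,s} <= m^(1/p-1/r) n^(1/s-1/q) ||A||_{p,q} for every A, and
   a vector v with unimodular entries whose image Av is flat (all entries of equal modulus) and
   attains ||A||_{p,q} turns every one of these inequalities into an equality.
   Conversely, equality at (r,s) = (inf,1) makes a maximiser v of ||Av||_1 on the unit cube
   extremal in a chain of power-mean and operator-norm inequalities, which forces v to be
   unimodular and Av to be flat.  Equality at some finite r > p and 1 < s < q then makes v a
   critical point of a function that is smooth near v because v and Av are flat, and the vanishing
   of its directional derivatives says A*A v = c v.  For p = q = 2 the identity
   ||Av||^2 = c ||v||^2 ties this eigenvalue to ||A||_{2,2}^2, the largest eigenvalue of A*A. *)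

theory Submission
  imports Defs
begin

section \<open>Tangent lines of powers and the power-mean inequality\<close>

lemma Bernoulli_powr_strict:
  fixes y a :: real
  assumes "0 \<le> y" "1 < a" "y \<noteq> 1"
  shows "1 + a * (y - 1) < y powr a"
proof -
  have der: "\<And>x. 0 < x \<Longrightarrow> DERIV (\<lambda>x. x powr a) x :> a * x powr (a - 1)"
    by (rule has_real_derivative_powr)
  consider "y = 0" | "0 < y" "y < 1" | "1 < y"
    using assms by linarith
  then show ?thesis
  proof cases
    case 1
    then show ?thesis using assms by simp
  next
    case 2
    obtain z where z: "y < z" "z < 1" "1 powr a - y powr a = (1 - y) * (a * z powr (a - 1))"
      using MVT2[of y 1 "\<lambda>x. x powr a" "\<lambda>x. a * x powr (a - 1)"] der 2 by force
    have "z powr (a - 1) < 1"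
      using powr_less_mono2[of "a - 1" z 1] z assms 2 by simp
    then have "(1 - y) * (a * z powr (a - 1)) < (1 - y) * a"
      using 2 assms by simp
    then show ?thesis using z by (simp add: algebra_simps)
  next
    case 3
    obtain z where z: "1 < z" "z < y" "y powr a - 1 powr a = (y - 1) * (a * z powr (a - 1))"
      using MVT2[of 1 y "\<lambda>x. x powr a" "\<lambda>x. a * x powr (a - 1)"] der 3 by force
    have "1 < z powr (a - 1)"
      using gr_one_powr[of z "a - 1"] z assms by simp
    then have "(y - 1) * a < (y - 1) * (a * z powr (a - 1))"
      using 3 assms by simp
    then show ?thesis using z by (simp add: algebra_simps)
  qed
qed

lemma powr_above_tangent_strict:
  fixes x \<mu> a :: real
  assumes "0 \<le> x" "0 < \<mu>" "1 < a" "x \<noteq> \<mu>"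
  shows "\<mu> powr a + a * \<mu> powr (a - 1) * (x - \<mu>) < x powr a"
proof -
  have "\<mu> powr a * (1 + a * (x / \<mu> - 1)) < \<mu> powr a * (x / \<mu>) powr a"
    using Bernoulli_powr_strict[of "x / \<mu>" a] assms by (intro mult_strict_left_mono) auto
  moreover have "\<mu> powr a * (x / \<mu>) powr a = x powr a"
    using assms by (simp add: powr_divide)
  moreover have "\<mu> powr a * (1 + a * (x / \<mu> - 1)) = \<mu> powr a + a * \<mu> powr (a - 1) * (x - \<mu>)"
    using assms by (simp add: powr_diff field_simps)
  ultimately show ?thesis by simp
qed

lemma powr_above_tangent:
  fixes x \<mu> a :: real
  assumes "0 \<le> x" "0 < \<mu>" "1 \<le> a"
  shows "\<mu> powr a + a * \<mu> powr (a - 1) * (x - \<mu>) \<le> x powr a"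
proof (cases "a = 1 \<or> x = \<mu>")
  case True
  then show ?thesis using assms by auto
next
  case False
  then show ?thesis using powr_above_tangent_strict[of x \<mu> a] assms by simp
qed

lemma sum_tangent_at_mean:
  fixes z :: "'i \<Rightarrow> real"
  assumes "finite I" "I \<noteq> {}"
  defines "\<mu> \<equiv> sum z I / real (card I)"
  shows "(\<Sum>i\<in>I. \<mu> powr a + a * \<mu> powr (a - 1) * (z i - \<mu>)) = real (card I) * \<mu> powr a"
proof -
  have "sum z I = real (card I) * \<mu>"
    using assms by (simp add: card_gt_0_iff)
  then show ?thesis
    by (simp add: sum.distrib sum_subtractf flip: sum_distrib_left)
qed

lemma card_mult_mean_powr_le:
  fixes z :: "'i \<Rightarrow> real"
  assumes fin: "finite I" and ne: "I \<noteq> {}" and nonneg: "\<And>i. i \<in> I \<Longrightarrow> 0 \<le> z i"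
    and a: "1 \<le> a"
  shows "real (card I) * (sum z I / real (card I)) powr a \<le> (\<Sum>i\<in>I. z i powr a)"
proof -
  define \<mu> where "\<mu> = sum z I / real (card I)"
  have "0 \<le> \<mu>"
    unfolding \<mu>_def using nonneg by (simp add: sum_nonneg)
  then consider "\<mu> = 0" | "0 < \<mu>"
    by linarith
  then show ?thesis
  proof cases
    case 1
    then show ?thesis unfolding \<mu>_def using nonneg by (auto intro!: sum_nonneg)
  next
    case 2
    have "(\<Sum>i\<in>I. \<mu> powr a + a * \<mu> powr (a - 1) * (z i - \<mu>)) \<le> (\<Sum>i\<in>I. z i powr a)"
      using powr_above_tangent nonneg 2 a by (intro sum_mono) auto
    then show ?thesis
      using sum_tangent_at_mean[OF fin ne] unfolding \<mu>_def by simp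
  qed
qed

lemma card_mult_mean_powr_eq_imp_const:
  fixes z :: "'i \<Rightarrow> real"
  assumes fin: "finite I" and ne: "I \<noteq> {}" and nonneg: "\<And>i. i \<in> I \<Longrightarrow> 0 \<le> z i"
    and a: "1 < a"
    and eq: "real (card I) * (sum z I / real (card I)) powr a = (\<Sum>i\<in>I. z i powr a)"
    and i: "i \<in> I"
  shows "z i = sum z I / real (card I)"
proof -
  define \<mu> where "\<mu> = sum z I / real (card I)"
  have "0 \<le> \<mu>"
    unfolding \<mu>_def using nonneg by (simp add: sum_nonneg)
  then consider "\<mu> = 0" | "0 < \<mu>"
    by linarith
  then show ?thesis
  proof cases
    case 1
    then have "sum z I = 0"
      unfolding \<mu>_def using fin ne by simp
    then have "\<forall>i\<in>I. z i = 0"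
      using sum_nonneg_eq_0_iff[OF fin] nonneg by blast
    then show ?thesis
      using \<open>sum z I = 0\<close> i by simp
  next
    case 2
    show ?thesis
    proof (rule ccontr)
      assume "z i \<noteq> sum z I / real (card I)"
      then have "(\<Sum>i\<in>I. \<mu> powr a + a * \<mu> powr (a - 1) * (z i - \<mu>)) < (\<Sum>i\<in>I. z i powr a)"
        using powr_above_tangent[of _ \<mu> a] powr_above_tangent_strict[of "z i" \<mu> a] nonneg 2 a i
        unfolding \<mu>_def by (intro sum_strict_mono_ex1[OF fin]) auto
      then show False
        using sum_tangent_at_mean[OF fin ne] eq unfolding \<mu>_def by simp
    qed
  qed
qed

lemma power_mean_le:
  fixes z :: "'i \<Rightarrow> real"
  assumes fin: "finite I" and ne: "I \<noteq> {}" and nonneg: "\<And>i. i \<in> I \<Longrightarrow> 0 \<le> z i"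
    and s: "1 \<le> s" and sq: "s \<le> q"
  shows "(\<Sum>i\<in>I. z i powr s) powr (1 / s)
    \<le> real (card I) powr (1 / s - 1 / q) * (\<Sum>i\<in>I. z i powr q) powr (1 / q)"
proof -
  define n where "n = real (card I)"
  have n: "0 < n"
    using fin ne by (simp add: n_def card_gt_0_iff)
  define w where "w i = z i powr s" for i
  define a where "a = q / s"
  have a: "1 \<le> a"
    using s sq by (simp add: a_def)
  have wa: "w i powr a = z i powr q" for i
    unfolding w_def a_def using s by (simp add: powr_powr)
  have "n * (sum w I / n) powr a \<le> (\<Sum>i\<in>I. w i powr a)"
    unfolding n_def by (rule card_mult_mean_powr_le[OF fin ne _ a]) (simp add: w_def)
  also have "\<dots> = (\<Sum>i\<in>I. z i powr q)"
    by (simp add: wa)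
  finally have "n * (sum w I / n) powr a \<le> (\<Sum>i\<in>I. z i powr q)" .
  then have "(sum w I / n) powr a \<le> (\<Sum>i\<in>I. z i powr q) / n"
    using n by (simp add: pos_le_divide_eq mult.commute)
  then have "((sum w I / n) powr a) powr (1 / q) \<le> ((\<Sum>i\<in>I. z i powr q) / n) powr (1 / q)"
    using s sq by (intro powr_mono2) auto
  then have "sum w I powr (1 / s) / n powr (1 / s) \<le> (\<Sum>i\<in>I. z i powr q) powr (1 / q) / n powr (1 / q)"
    using s sq by (simp add: powr_powr a_def powr_divide sum_nonneg w_def)
  then have "sum w I powr (1 / s) \<le> n powr (1 / s) * ((\<Sum>i\<in>I. z i powr q) powr (1 / q) / n powr (1 / q))"
    using n by (simp add: pos_divide_le_eq mult.commute)
  then show ?thesis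
    by (simp add: w_def n_def powr_diff divide_inverse mult_ac)
qed

lemma power_mean_eq_imp_const:
  fixes z :: "'i \<Rightarrow> real"
  assumes fin: "finite I" and ne: "I \<noteq> {}" and nonneg: "\<And>i. i \<in> I \<Longrightarrow> 0 \<le> z i"
    and q: "1 < q"
    and eq: "sum z I = real (card I) powr (1 - 1 / q) * (\<Sum>i\<in>I. z i powr q) powr (1 / q)"
    and i: "i \<in> I"
  shows "z i = sum z I / real (card I)"
proof -
  define n where "n = real (card I)"
  have n: "0 < n"
    using fin ne by (simp add: n_def card_gt_0_iff)
  define N where "N = n powr (1 / q)"
  have N: "0 < N" "N powr q = n"
    unfolding N_def using n q by (simp_all add: powr_powr)
  have "n powr (1 - 1 / q) = n / N"
    unfolding N_def using n by (simp add: powr_diff)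
  then have "sum z I / n = (\<Sum>i\<in>I. z i powr q) powr (1 / q) / N"
    using eq n by (simp add: n_def)
  then have "(sum z I / n) powr q = (\<Sum>i\<in>I. z i powr q) / n"
    using N q by (simp add: powr_divide powr_powr sum_nonneg)
  then have mean: "real (card I) * (sum z I / real (card I)) powr q = (\<Sum>i\<in>I. z i powr q)"
    using n by (simp add: n_def)
  show ?thesis
    by (rule card_mult_mean_powr_eq_imp_const[OF fin ne nonneg q mean i])
qed

section \<open>Hoelder norms of vectors\<close>

lemma ereal_ge_1_cases:
  fixes p :: ereal
  assumes "1 \<le> p"
  obtains "p = \<infinity>" | r where "p = ereal r" "1 \<le> r"
  using assms by (cases p) auto

lemma inv_exp_ereal [simp]: "inv_exp (ereal r) = 1 / r"
  by (simp add: inv_exp_def)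

lemma inv_exp_infinity [simp]: "inv_exp \<infinity> = 0"
  by (simp add: inv_exp_def)

lemma inv_exp_1 [simp]: "inv_exp 1 = 1"
  by (simp add: inv_exp_def)

lemma lp_norm_ereal: "lp_norm (ereal r) x = (\<Sum>i\<in>UNIV. norm (x $ i) powr r) powr (1 / r)"
  by (simp add: lp_norm_def)

lemma lp_norm_infinity: "lp_norm \<infinity> x = Max (range (\<lambda>i. norm (x $ i)))"
  by (simp add: lp_norm_def)

lemma lp_norm_1: "lp_norm 1 x = (\<Sum>i\<in>UNIV. norm (x $ i))"
  using lp_norm_ereal[of 1 x] by (simp add: one_ereal_def sum_nonneg)

lemma lp_norm_2: "lp_norm 2 (x :: ('a::real_normed_vector)^'n) = norm x"
  using lp_norm_ereal[of 2 x]
  by (simp add: powr_half_sqrt sum_nonneg norm_vec_def L2_set_def)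

lemma lp_norm_ereal_powr:
  assumes "0 < r"
  shows "lp_norm (ereal r) x powr s = (\<Sum>i\<in>UNIV. norm (x $ i) powr r) powr (s / r)"
  using assms by (simp add: lp_norm_ereal powr_powr)

lemma norm_nth_le_lp_norm_infinity: "norm (x $ i) \<le> lp_norm \<infinity> x"
  unfolding lp_norm_infinity by (rule Max_ge) auto

lemma lp_norm_infinity_attained: "\<exists>i. lp_norm \<infinity> x = norm (x $ i)"
proof -
  have "Max (range (\<lambda>i. norm (x $ i))) \<in> range (\<lambda>i. norm (x $ i))"
    by (rule Max_in) auto
  then obtain i where "Max (range (\<lambda>i. norm (x $ i))) = norm (x $ i)"
    by blast
  then show ?thesis unfolding lp_norm_infinity by blast
qed

lemma lp_norm_infinity_le:
  fixes x :: "('a::real_normed_vector)^'n"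
  assumes "1 \<le> p"
  shows "lp_norm \<infinity> x \<le> lp_norm p x"
  using assms
proof (cases rule: ereal_ge_1_cases)
  case (2 r)
  obtain i where i: "lp_norm \<infinity> x = norm (x $ i)"
    using lp_norm_infinity_attained by blast
  have "norm (x $ i) = (norm (x $ i) powr r) powr (1 / r)"
    using 2 by (simp add: powr_powr)
  also have "\<dots> \<le> (\<Sum>j\<in>UNIV. norm (x $ j) powr r) powr (1 / r)"
    using 2 by (intro powr_mono2 member_le_sum) auto
  finally show ?thesis using i 2 by (simp add: lp_norm_ereal)
qed simp

lemma lp_norm_nonneg:
  fixes x :: "('a::real_normed_vector)^'n"
  assumes "1 \<le> p"
  shows "0 \<le> lp_norm p x"
  using lp_norm_infinity_le[OF assms, of x] norm_nth_le_lp_norm_infinity[of x]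
  by (meson norm_ge_zero order_trans)

lemma lp_norm_pos:
  fixes x :: "('a::real_normed_vector)^'n"
  assumes "1 \<le> p" "x \<noteq> 0"
  shows "0 < lp_norm p x"
proof -
  obtain i where "x $ i \<noteq> 0"
    using assms(2) by (auto simp: vec_eq_iff)
  then have "0 < norm (x $ i)" by simp
  also have "\<dots> \<le> lp_norm p x"
    using norm_nth_le_lp_norm_infinity lp_norm_infinity_le[OF assms(1)] by (rule order_trans)
  finally show ?thesis .
qed

lemma lp_norm_zero [simp]:
  assumes "1 \<le> p"
  shows "lp_norm p (0 :: ('a::real_normed_vector)^'n) = 0"
  using assms by (cases rule: ereal_ge_1_cases) (auto simp: lp_norm_def)

lemma lp_norm_flat:
  fixes x :: "('a::real_normed_vector)^'n"
  assumes "1 \<le> p" "0 \<le> c" "\<And>i. norm (x $ i) = c"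
  shows "lp_norm p x = real CARD('n) powr inv_exp p * c"
  using assms(1)
proof (cases rule: ereal_ge_1_cases)
  case 1
  have "range (\<lambda>i. norm (x $ i)) = {c}"
    using assms by auto
  then show ?thesis using 1 by (simp add: lp_norm_infinity)
next
  case (2 r)
  then show ?thesis
    using assms by (simp add: lp_norm_ereal powr_mult powr_powr)
qed

lemma lp_norm_le_card_powr_lp_norm:
  fixes x :: "('a::real_normed_vector)^'n"
  assumes s: "1 \<le> s" and sq: "s \<le> q"
  shows "lp_norm s x \<le> real CARD('n) powr (inv_exp s - inv_exp q) * lp_norm q x"
  using s
proof (cases rule: ereal_ge_1_cases)
  case 1
  then show ?thesis using sq by simp
next
  case (2 s')
  show ?thesis
    using order_trans[OF s sq]
  proof (cases rule: ereal_ge_1_cases)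
    case 1
    define M where "M = lp_norm \<infinity> x"
    have "(\<Sum>i\<in>UNIV. norm (x $ i) powr s') \<le> (\<Sum>i\<in>(UNIV::'n set). M powr s')"
      using 2 by (intro sum_mono powr_mono2) (auto simp: M_def norm_nth_le_lp_norm_infinity)
    then have "(\<Sum>i\<in>UNIV. norm (x $ i) powr s') powr (1 / s') \<le> (real CARD('n) * M powr s') powr (1 / s')"
      using 2 by (intro powr_mono2) (auto intro!: sum_nonneg)
    also have "\<dots> = real CARD('n) powr (1 / s') * M"
      using 2 by (simp add: powr_mult powr_powr M_def lp_norm_nonneg)
    finally show ?thesis
      using 1 2 by (simp add: lp_norm_ereal M_def)
  next
    case (2 q')
    then show ?thesis
      using power_mean_le[of UNIV "\<lambda>i. norm (x $ i)" s' q'] s sq \<open>s = ereal s'\<close>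
      by (simp add: lp_norm_ereal)
  qed
qed

lemma flat_if_lp_norm_1_eq:
  fixes x :: "('a::real_normed_vector)^'n"
  assumes q: "1 < q"
    and eq: "lp_norm 1 x = real CARD('n) powr (1 - inv_exp q) * lp_norm q x"
  shows "norm (x $ i) = lp_norm 1 x / real CARD('n)"
  using less_imp_le[OF q]
proof (cases rule: ereal_ge_1_cases)
  case 1
  define M where "M = lp_norm \<infinity> x"
  have "(\<Sum>j\<in>UNIV. M - norm (x $ j)) = 0"
    using eq 1 by (simp add: sum_subtractf lp_norm_1 M_def)
  then have "M - norm (x $ i) = 0"
    by (subst (asm) sum_nonneg_eq_0_iff) (auto simp: M_def norm_nth_le_lp_norm_infinity)
  then show ?thesis
    using eq 1 by (simp add: M_def)
next
  case (2 q')
  have "norm (x $ i) = (\<Sum>j\<in>UNIV. norm (x $ j)) / real (card (UNIV :: 'n set))"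
    by (rule power_mean_eq_imp_const[of UNIV "\<lambda>j. norm (x $ j)" q'])
      (use eq 2 q in \<open>simp_all add: lp_norm_1 lp_norm_ereal\<close>)
  then show ?thesis
    by (simp add: lp_norm_1)
qed

lemma unimodular_if_lp_norm_eq:
  fixes v :: "('a::real_normed_vector)^'n"
  assumes p: "0 < p" and le: "\<And>j. norm (v $ j) \<le> 1"
    and eq: "lp_norm (ereal p) v = real CARD('n) powr (1 / p)"
  shows "norm (v $ j) = 1"
proof -
  define t where "t j = norm (v $ j) powr p" for j
  have t_le: "t j \<le> 1" for j
    unfolding t_def using le p by (intro powr_le1) auto
  have "(\<Sum>j\<in>UNIV. t j) = real CARD('n)"
    using arg_cong[OF eq, of "\<lambda>y. y powr p"] p by (simp add: lp_norm_ereal_powr t_def sum_nonneg powr_powr)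
  then have "(\<Sum>j\<in>UNIV. 1 - t j) = 0"
    by (simp add: sum_subtractf)
  then have "t j = 1"
    by (subst (asm) sum_nonneg_eq_0_iff) (auto simp: t_le)
  then have "(norm (v $ j) powr p) powr (1 / p) = 1"
    by (simp add: t_def)
  then show ?thesis
    using p by (simp add: powr_powr)
qed

section \<open>Operator norms\<close>

lemma matrix_vector_mult_scaleR_field:
  fixes A :: "('a::real_normed_field)^'m^'n"
  shows "A *v (t *\<^sub>R x) = t *\<^sub>R (A *v x)"
  using linear_scale[OF matrix_vector_mul_linear] .

lemma lp_norm_infinity_mv_le:
  fixes A :: "('a::real_normed_field)^'m^'n"
  shows "lp_norm \<infinity> (A *v x) \<le> (\<Sum>i\<in>UNIV. \<Sum>j\<in>UNIV. norm (A $ i $ j)) * lp_norm \<infinity> x"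
proof -
  obtain i where i: "lp_norm \<infinity> (A *v x) = norm ((A *v x) $ i)"
    using lp_norm_infinity_attained by blast
  have "norm ((A *v x) $ i) \<le> (\<Sum>j\<in>UNIV. norm (A $ i $ j * x $ j))"
    unfolding matrix_vector_mult_def by (simp add: norm_sum)
  also have "\<dots> \<le> (\<Sum>j\<in>UNIV. norm (A $ i $ j)) * lp_norm \<infinity> x"
    by (simp add: sum_distrib_right norm_mult sum_mono mult_left_mono norm_nth_le_lp_norm_infinity)
  also have "\<dots> \<le> (\<Sum>i\<in>UNIV. \<Sum>j\<in>UNIV. norm (A $ i $ j)) * lp_norm \<infinity> x"
    by (intro mult_right_mono member_le_sum lp_norm_nonneg) (auto intro: sum_nonneg)
  finally show ?thesis using i by simp
qed

lemma op_norm_bdd_above: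
  fixes A :: "('a::real_normed_field)^'m^'n"
  assumes p: "1 \<le> p" and q: "1 \<le> q"
  shows "bdd_above {lp_norm q (A *v x) / lp_norm p x | x. x \<noteq> 0}"
proof -
  define C where "C = real CARD('n) powr inv_exp q * (\<Sum>i\<in>UNIV. \<Sum>j\<in>UNIV. norm (A $ i $ j))"
  have "0 \<le> C"
    unfolding C_def by (intro mult_nonneg_nonneg sum_nonneg) auto
  have bound: "lp_norm q (A *v x) \<le> C * lp_norm p x" for x
  proof -
    have "lp_norm q (A *v x) \<le> real CARD('n) powr inv_exp q * lp_norm \<infinity> (A *v x)"
      using lp_norm_le_card_powr_lp_norm[OF q, of \<infinity>] by simp
    also have "\<dots> \<le> C * lp_norm \<infinity> x"
      unfolding C_def mult.assoc by (intro mult_left_mono lp_norm_infinity_mv_le) simp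
    also have "\<dots> \<le> C * lp_norm p x"
      using \<open>0 \<le> C\<close> by (intro mult_left_mono lp_norm_infinity_le p)
    finally show ?thesis .
  qed
  have "lp_norm q (A *v x) / lp_norm p x \<le> C" if "x \<noteq> 0" for x
    using bound[of x] lp_norm_pos[OF p that] by (simp add: pos_divide_le_eq)
  then show ?thesis
    by (intro bdd_aboveI[of _ C]) blast
qed

lemma op_norm_ratio_le:
  fixes A :: "('a::real_normed_field)^'m^'n"
  assumes "1 \<le> p" "1 \<le> q" "x \<noteq> 0"
  shows "lp_norm q (A *v x) / lp_norm p x \<le> op_norm p q A"
  unfolding op_norm_def
  using assms op_norm_bdd_above[OF assms(1,2), of A] by (intro cSup_upper) auto

lemma lp_norm_mv_le_op_norm:
  fixes A :: "('a::real_normed_field)^'m^'n"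
  assumes p: "1 \<le> p" and q: "1 \<le> q"
  shows "lp_norm q (A *v x) \<le> op_norm p q A * lp_norm p x"
proof (cases "x = 0")
  case False
  then show ?thesis
    using op_norm_ratio_le[OF p q False, of A] lp_norm_pos[OF p False]
    by (simp add: pos_divide_le_eq)
qed (use p q in simp)

lemma op_norm_le:
  fixes A :: "('a::real_normed_field)^'m^'n"
  assumes p: "1 \<le> p" and le: "\<And>x. x \<noteq> 0 \<Longrightarrow> lp_norm q (A *v x) \<le> C * lp_norm p x"
  shows "op_norm p q A \<le> C"
proof -
  have "(vec 1 :: 'a^'m) \<noteq> 0"
    by (simp add: vec_eq_iff)
  then have "{lp_norm q (A *v x) / lp_norm p x | x. x \<noteq> 0} \<noteq> {}"
    by blast
  then show ?thesis
    unfolding op_norm_def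
  proof (rule cSup_least)
    fix y assume "y \<in> {lp_norm q (A *v x) / lp_norm p x | x. x \<noteq> 0}"
    then obtain x where "x \<noteq> 0" "y = lp_norm q (A *v x) / lp_norm p x"
      by blast
    then show "y \<le> C"
      using le[OF \<open>x \<noteq> 0\<close>] lp_norm_pos[OF p \<open>x \<noteq> 0\<close>] by (simp add: pos_divide_le_eq)
  qed
qed

lemma op_norm_nonneg:
  fixes A :: "('a::real_normed_field)^'m^'n"
  assumes p: "1 \<le> p" and q: "1 \<le> q"
  shows "0 \<le> op_norm p q A"
proof -
  have x: "(vec 1 :: 'a^'m) \<noteq> 0"
    by (simp add: vec_eq_iff)
  show ?thesis
    using op_norm_ratio_le[OF p q x, of A] lp_norm_nonneg[OF q, of "A *v vec 1"] lp_norm_pos[OF p x]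
    by (meson divide_nonneg_pos order_trans)
qed

lemma op_norm_le_card_powr_op_norm:
  fixes A :: "('a::real_normed_field)^'m^'n"
  assumes p: "1 \<le> p" "p \<le> r" and s: "1 \<le> s" "s \<le> q"
  shows "op_norm r s A \<le> real CARD('m) powr (inv_exp p - inv_exp r)
    * real CARD('n) powr (inv_exp s - inv_exp q) * op_norm p q A"
proof (rule op_norm_le)
  show "1 \<le> r" using p by simp
  have q: "1 \<le> q" using s by simp
  fix x :: "'a^'m"
  have "lp_norm s (A *v x) \<le> real CARD('n) powr (inv_exp s - inv_exp q) * lp_norm q (A *v x)"
    by (rule lp_norm_le_card_powr_lp_norm[OF s])
  also have "\<dots> \<le> real CARD('n) powr (inv_exp s - inv_exp q) * (op_norm p q A * lp_norm p x)"
    by (intro mult_left_mono lp_norm_mv_le_op_norm p q) simp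
  also have "\<dots> \<le> real CARD('n) powr (inv_exp s - inv_exp q)
      * (op_norm p q A * (real CARD('m) powr (inv_exp p - inv_exp r) * lp_norm r x))"
    by (intro mult_left_mono lp_norm_le_card_powr_lp_norm p op_norm_nonneg q) simp_all
  finally show "lp_norm s (A *v x) \<le> real CARD('m) powr (inv_exp p - inv_exp r)
      * real CARD('n) powr (inv_exp s - inv_exp q) * op_norm p q A * lp_norm r x"
    by (simp add: mult_ac)
qed

lemma mv_eq_0_if_op_norm_eq_0:
  fixes A :: "('a::real_normed_field)^'m^'n"
  assumes "1 \<le> p" "1 \<le> q" "op_norm p q A = 0"
  shows "A *v x = 0"
  using lp_norm_mv_le_op_norm[OF assms(1,2), of A x] lp_norm_pos[OF assms(2), of "A *v x"] assms(3)
  by fastforce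

section \<open>Extremal vectors\<close>

lemma lp_norm_mv_flat:
  fixes A :: "('a::real_normed_field)^'m^'n"
  assumes r: "1 \<le> r" and s: "1 \<le> s"
    and v: "\<And>j. norm (v $ j) = 1" and Av: "\<And>i. norm ((A *v v) $ i) = \<tau>"
    and \<tau>: "\<tau> = real CARD('m) powr inv_exp p * real CARD('n) powr (- inv_exp q) * K"
  shows "lp_norm s (A *v v) = real CARD('m) powr (inv_exp p - inv_exp r)
    * real CARD('n) powr (inv_exp s - inv_exp q) * K * lp_norm r v"
proof -
  have "0 \<le> \<tau>"
    using Av[of undefined] by (metis norm_ge_zero)
  then have "lp_norm s (A *v v) = real CARD('n) powr inv_exp s * \<tau>"
    by (rule lp_norm_flat[OF s _ Av])
  moreover have "lp_norm r v = real CARD('m) powr inv_exp r"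
    using lp_norm_flat[OF r, of 1 v] v by simp
  ultimately show ?thesis
    unfolding \<tau> by (simp add: powr_diff powr_minus field_simps)
qed

lemma E_inf1_if_flat:
  fixes A :: "('a::real_normed_field)^'m^'n"
  assumes p: "1 \<le> p"
    and v: "\<And>j. norm (v $ j) = 1" and Av: "\<And>i. norm ((A *v v) $ i) = \<tau>"
    and \<tau>: "\<tau> = real CARD('m) powr inv_exp p * real CARD('n) powr (- inv_exp q) * op_norm p q A"
  shows "E_inf1 p q A"
  unfolding E_inf1_def
proof (intro allI impI)
  fix r s :: ereal
  assume "p < r \<and> r \<le> \<infinity> \<and> 1 \<le> s \<and> s < q"
  then have r: "1 \<le> r" "p \<le> r" and s: "1 \<le> s" "s \<le> q"
    using p by auto
  have "v \<noteq> 0"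
    using v[of undefined] by auto
  then have "lp_norm s (A *v v) / lp_norm r v \<le> op_norm r s A"
    by (rule op_norm_ratio_le[OF r(1) s(1)])
  then have "real CARD('m) powr (inv_exp p - inv_exp r)
      * real CARD('n) powr (inv_exp s - inv_exp q) * op_norm p q A \<le> op_norm r s A"
    using lp_norm_mv_flat[OF r(1) s(1) v Av \<tau>] lp_norm_pos[OF r(1) \<open>v \<noteq> 0\<close>] by simp
  then show "op_norm r s A = real CARD('m) powr (inv_exp p - inv_exp r)
      * real CARD('n) powr (inv_exp s - inv_exp q) * op_norm p q A"
    using op_norm_le_card_powr_op_norm[OF p r(2) s, of A] by linarith
qed

lemma lp_norm_1_mv_scaleR:
  fixes A :: "('a::real_normed_field)^'m^'n"
  shows "lp_norm 1 (A *v (t *\<^sub>R x)) = \<bar>t\<bar> * lp_norm 1 (A *v x)"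
  by (simp add: lp_norm_1 matrix_vector_mult_scaleR_field sum_distrib_left)

lemma exists_cube_maximiser:
  fixes A :: "('a::{euclidean_space,real_normed_field})^'m^'n"
  shows "\<exists>v. (\<forall>j. norm (v $ j) \<le> 1) \<and> op_norm \<infinity> 1 A \<le> lp_norm 1 (A *v v)"
proof -
  define B where "B = {x :: 'a^'m. \<forall>j. norm (x $ j) \<le> 1}"
  have "bounded B"
  proof (rule boundedI)
    fix x assume "x \<in> B"
    then have "norm x \<le> (\<Sum>j\<in>UNIV. norm (x $ j))"
      by (simp add: norm_vec_def L2_set_le_sum)
    also have "\<dots> \<le> real CARD('m)"
      using \<open>x \<in> B\<close> sum_mono[of UNIV "\<lambda>j. norm (x $ j)" "\<lambda>_. 1"] by (simp add: B_def)
    finally show "norm x \<le> real CARD('m)" .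
  qed
  moreover have "closed B"
    unfolding B_def
    by (intro closed_Collect_all closed_Collect_le continuous_on_norm continuous_on_const
        linear_continuous_on bounded_linear_vec_nth)
  moreover have "vec 1 \<in> B"
    by (simp add: B_def)
  moreover have "continuous_on B (\<lambda>x. lp_norm 1 (A *v x))"
    unfolding lp_norm_1
    by (intro continuous_on_sum continuous_on_norm linear_continuous_on
        bounded_linear_compose[OF bounded_linear_vec_nth matrix_vector_mul_bounded_linear])
  ultimately obtain v where v: "v \<in> B" and max: "\<And>y. y \<in> B \<Longrightarrow> lp_norm 1 (A *v y) \<le> lp_norm 1 (A *v v)"
    using continuous_attains_sup[of B "\<lambda>x. lp_norm 1 (A *v x)"] compact_eq_bounded_closed by blast
  have "op_norm \<infinity> 1 A \<le> lp_norm 1 (A *v v)"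
  proof (rule op_norm_le)
    fix x :: "'a^'m" assume "x \<noteq> 0"
    define c where "c = lp_norm \<infinity> x"
    have c: "0 < c"
      unfolding c_def using lp_norm_pos[OF _ \<open>x \<noteq> 0\<close>] by simp
    have "(1 / c) *\<^sub>R x \<in> B"
      using c norm_nth_le_lp_norm_infinity[of x] by (simp add: B_def c_def divide_le_eq)
    then have "lp_norm 1 (A *v x) / c \<le> lp_norm 1 (A *v v)"
      using max[OF \<open>(1 / c) *\<^sub>R x \<in> B\<close>] lp_norm_1_mv_scaleR[of A "1 / c" x] c by simp
    then show "lp_norm 1 (A *v x) \<le> lp_norm 1 (A *v v) * lp_norm \<infinity> x"
      using c by (simp add: c_def divide_le_eq mult.commute)
  qed simp
  then show ?thesis
    using v by (auto simp: B_def)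
qed

text \<open>If \<open>\<parallel>A\<parallel>\<^sub>\<infinity>\<^sub>,\<^sub>1\<close> has its largest possible value, every inequality in
  \<open>\<parallel>A\<parallel>\<^sub>\<infinity>\<^sub>,\<^sub>1 \<le> \<parallel>Av\<parallel>\<^sub>1 \<le> n\<^bsup>1-1/q\<^esup> \<parallel>Av\<parallel>\<^sub>q \<le> n\<^bsup>1-1/q\<^esup> \<parallel>A\<parallel>\<^sub>p\<^sub>,\<^sub>q \<parallel>v\<parallel>\<^sub>p \<le> m\<^bsup>1/p\<^esup> n\<^bsup>1-1/q\<^esup> \<parallel>A\<parallel>\<^sub>p\<^sub>,\<^sub>q\<close>
  is an equality.\<close>
lemma cube_maximiser_extremal:
  fixes A :: "('a::real_normed_field)^'m^'n"
  assumes p: "1 \<le> p" and q: "1 \<le> q" and K: "0 < op_norm p q A"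
    and E: "op_norm \<infinity> 1 A
      = real CARD('m) powr inv_exp p * real CARD('n) powr (1 - inv_exp q) * op_norm p q A"
    and cube: "\<And>j. norm (v $ j) \<le> 1" and max: "op_norm \<infinity> 1 A \<le> lp_norm 1 (A *v v)"
  shows "lp_norm p v = real CARD('m) powr inv_exp p"
    and "lp_norm q (A *v v) = op_norm p q A * real CARD('m) powr inv_exp p"
    and "lp_norm 1 (A *v v) = real CARD('n) powr (1 - inv_exp q) * lp_norm q (A *v v)"
proof -
  define \<mu> where "\<mu> = real CARD('m) powr inv_exp p"
  define N where "N = real CARD('n) powr (1 - inv_exp q)"
  define K where "K = op_norm p q A"
  have N: "0 < N" and NK: "0 < N * K"
    using K by (simp_all add: N_def K_def)
  have upper1: "lp_norm 1 (A *v v) \<le> N * lp_norm q (A *v v)"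
    using lp_norm_le_card_powr_lp_norm[of 1 q "A *v v"] q by (simp add: N_def)
  have upper2: "lp_norm q (A *v v) \<le> K * lp_norm p v"
    unfolding K_def by (rule lp_norm_mv_le_op_norm[OF p q])
  have "lp_norm \<infinity> v \<le> 1"
    using lp_norm_infinity_attained[of v] cube by metis
  have "lp_norm p v \<le> \<mu> * lp_norm \<infinity> v"
    using lp_norm_le_card_powr_lp_norm[OF p, of \<infinity> v] by (simp add: \<mu>_def)
  also have "\<dots> \<le> \<mu>"
    using \<open>lp_norm \<infinity> v \<le> 1\<close> by (simp add: \<mu>_def mult_left_le)
  finally have upper3: "lp_norm p v \<le> \<mu>" .
  have lower: "\<mu> * N * K \<le> lp_norm 1 (A *v v)"
    using E max by (simp add: \<mu>_def N_def K_def)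
  have "\<mu> * N * K \<le> N * (K * lp_norm p v)"
    using lower upper1 mult_left_mono[OF upper2, of N] N by linarith
  then have "\<mu> * (N * K) \<le> lp_norm p v * (N * K)"
    by (simp add: mult_ac)
  then have "\<mu> \<le> lp_norm p v"
    using NK by (rule mult_right_le_imp_le)
  then show v_norm: "lp_norm p v = real CARD('m) powr inv_exp p"
    using upper3 by (simp add: \<mu>_def)
  have "N * (K * \<mu>) \<le> N * lp_norm q (A *v v)"
    using order_trans[OF lower upper1] by (simp add: mult_ac)
  then have "K * \<mu> \<le> lp_norm q (A *v v)"
    using N by simp
  then show Av_norm: "lp_norm q (A *v v) = op_norm p q A * real CARD('m) powr inv_exp p"
    using upper2 v_norm by (simp add: K_def \<mu>_def)
  then have "N * lp_norm q (A *v v) \<le> lp_norm 1 (A *v v)"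
    using lower by (simp add: \<mu>_def K_def mult_ac)
  then show "lp_norm 1 (A *v v) = real CARD('n) powr (1 - inv_exp q) * lp_norm q (A *v v)"
    using upper1 by (simp add: N_def)
qed

lemma cube_maximiser_flat:
  fixes A :: "('a::real_normed_field)^'m^'n"
  assumes p: "p = ereal p'" "1 \<le> p'" and q: "1 < q" and K: "0 < op_norm p q A"
    and E: "op_norm \<infinity> 1 A
      = real CARD('m) powr inv_exp p * real CARD('n) powr (1 - inv_exp q) * op_norm p q A"
    and cube: "\<And>j. norm (v $ j) \<le> 1" and max: "op_norm \<infinity> 1 A \<le> lp_norm 1 (A *v v)"
  shows "norm (v $ j) = 1"
    and "norm ((A *v v) $ i)
      = real CARD('m) powr inv_exp p * real CARD('n) powr (- inv_exp q) * op_norm p q A"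
proof -
  have p1: "1 \<le> p" and q1: "1 \<le> q"
    using p q by auto
  note extremal = cube_maximiser_extremal[OF p1 q1 K E cube max]
  show "norm (v $ j) = 1"
    using unimodular_if_lp_norm_eq[of p' v] extremal(1) cube p by simp
  have "norm ((A *v v) $ i) = lp_norm 1 (A *v v) / real CARD('n)"
    by (rule flat_if_lp_norm_1_eq[OF q extremal(3)])
  also have "\<dots> = real CARD('n) powr (1 - inv_exp q) / real CARD('n)
      * (op_norm p q A * real CARD('m) powr inv_exp p)"
    by (simp add: extremal(2,3))
  also have "\<dots> = real CARD('m) powr inv_exp p * real CARD('n) powr (- inv_exp q) * op_norm p q A"
    by (simp add: powr_diff powr_minus divide_inverse)
  finally show "norm ((A *v v) $ i)
      = real CARD('m) powr inv_exp p * real CARD('n) powr (- inv_exp q) * op_norm p q A" .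
qed

lemma inner_add_scaleR_self:
  fixes a b :: "'a::real_inner"
  shows "inner (a + t *\<^sub>R b) (a + t *\<^sub>R b) = inner a a + 2 * t * inner a b + t\<^sup>2 * inner b b"
  by (simp add: inner_add_left inner_add_right inner_commute power2_eq_square algebra_simps)

lemma DERIV_sum_norm_powr:
  fixes x w :: "('a::real_inner)^'n"
  assumes flat: "\<And>j. norm (x $ j) = c" and c: "0 < c"
  shows "DERIV (\<lambda>t. \<Sum>j\<in>UNIV. norm ((x + t *\<^sub>R w) $ j) powr r) 0 :> r * c powr (r - 2) * inner x w"
proof -
  have "DERIV (\<lambda>t. norm ((x + t *\<^sub>R w) $ j) powr r) 0 :> r * c powr (r - 2) * inner (x $ j) (w $ j)"
    for j
  proof -
    define Q where "Q t = inner (x $ j) (x $ j) + 2 * t * inner (x $ j) (w $ j) + t\<^sup>2 * inner (w $ j) (w $ j)"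
      for t
    have "norm ((x + t *\<^sub>R w) $ j) powr r = Q t powr (r / 2)" for t
    proof -
      have "norm ((x + t *\<^sub>R w) $ j) powr r = (norm ((x + t *\<^sub>R w) $ j) powr 2) powr (r / 2)"
        by (subst powr_powr) simp
      also have "norm ((x + t *\<^sub>R w) $ j) powr 2 = Q t"
        by (simp add: Q_def powr_numeral power2_norm_eq_inner inner_add_scaleR_self)
      finally show ?thesis .
    qed
    then have Q: "(\<lambda>t. norm ((x + t *\<^sub>R w) $ j) powr r) = (\<lambda>t. Q t powr (r / 2))"
      by simp
    have dQ: "DERIV Q 0 :> 2 * inner (x $ j) (w $ j)"
      unfolding Q_def by (auto intro!: derivative_eq_intros)
    have Q0: "Q 0 = c powr 2"
      using flat[of j] c by (simp add: Q_def powr_numeral flip: power2_norm_eq_inner)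
    have "DERIV (\<lambda>t. Q t powr (r / 2)) 0 :> r / 2 * Q 0 powr (r / 2 - 1) * (2 * inner (x $ j) (w $ j))"
      using DERIV_fun_powr[OF dQ, of "r / 2"] Q0 c by simp
    moreover have "Q 0 powr (r / 2 - 1) = c powr (r - 2)"
      using Q0 by (simp add: powr_powr algebra_simps)
    ultimately show ?thesis
      unfolding Q by (simp add: algebra_simps)
  qed
  then have "DERIV (\<lambda>t. \<Sum>j\<in>UNIV. norm ((x + t *\<^sub>R w) $ j) powr r) 0
      :> (\<Sum>j\<in>UNIV. r * c powr (r - 2) * inner (x $ j) (w $ j))"
    by (rule DERIV_sum)
  then show ?thesis
    by (simp add: inner_vec_def sum_distrib_left)
qed

text \<open>The vector \<open>v\<close> minimises \<open>x \<mapsto> (L \<parallel>x\<parallel>\<^sub>r)\<^sup>s - \<parallel>Ax\<parallel>\<^sub>s\<^sup>s\<close>, which is differentiable at \<open>v\<close>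
  because no entry of \<open>v\<close> or \<open>Av\<close> vanishes; its directional derivatives at \<open>v\<close> are
  \<open>L\<^sup>s m\<^bsup>s/r-1\<^esup> s \<langle>v, w\<rangle> - s \<tau>\<^bsup>s-2\<^esup> \<langle>Av, Aw\<rangle>\<close>.\<close>
lemma stationary_if_flat_attains:
  fixes A :: "('a::{real_normed_field,real_inner})^'m^'n"
  assumes r: "1 < r" and s: "1 < s"
    and v: "\<And>j. norm (v $ j) = 1" and Av: "\<And>i. norm ((A *v v) $ i) = \<tau>" and \<tau>: "0 < \<tau>"
    and L: "0 \<le> L"
    and bound: "\<And>x. lp_norm (ereal s) (A *v x) \<le> L * lp_norm (ereal r) x"
    and attained: "L * lp_norm (ereal r) v \<le> lp_norm (ereal s) (A *v v)"
  shows "\<exists>c. \<forall>w. inner (A *v v) (A *v w) = c * inner v w"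
proof -
  define m where "m = real CARD('m)"
  define \<phi> where "\<phi> x = L powr s * (\<Sum>j\<in>UNIV. norm (x $ j) powr r) powr (s / r)
    - (\<Sum>i\<in>UNIV. norm ((A *v x) $ i) powr s)" for x
  have \<phi>: "\<phi> x = (L * lp_norm (ereal r) x) powr s - lp_norm (ereal s) (A *v x) powr s" for x
    using r s L lp_norm_nonneg[of "ereal r" x]
    by (simp add: \<phi>_def lp_norm_ereal_powr powr_mult sum_nonneg)
  have \<phi>_min: "\<phi> v \<le> \<phi> x" for x
  proof -
    have "(L * lp_norm (ereal r) v) powr s \<le> lp_norm (ereal s) (A *v v) powr s"
      using attained L s r lp_norm_nonneg[of "ereal r" v] by (intro powr_mono2) auto
    moreover have "lp_norm (ereal s) (A *v x) powr s \<le> (L * lp_norm (ereal r) x) powr s"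
      using bound[of x] s lp_norm_nonneg[of "ereal s" "A *v x"] by (intro powr_mono2) auto
    ultimately show ?thesis
      unfolding \<phi> by simp
  qed
  have "inner (A *v v) (A *v w) = L powr s * m powr (s / r - 1) / \<tau> powr (s - 2) * inner v w" for w
  proof -
    have dsum: "DERIV (\<lambda>t. \<Sum>j\<in>UNIV. norm ((v + t *\<^sub>R w) $ j) powr r) 0 :> r * inner v w"
      using DERIV_sum_norm_powr[OF v zero_less_one, of w r] by simp
    have "(\<Sum>j\<in>UNIV. norm ((v + 0 *\<^sub>R w) $ j) powr r) = m"
      using v by (simp add: m_def)
    then have dv: "DERIV (\<lambda>t. (\<Sum>j\<in>UNIV. norm ((v + t *\<^sub>R w) $ j) powr r) powr (s / r)) 0
        :> s / r * m powr (s / r - 1) * (r * inner v w)"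
      using DERIV_fun_powr[OF dsum, of "s / r"] by (simp add: m_def)
    have "A *v (v + t *\<^sub>R w) = A *v v + t *\<^sub>R (A *v w)" for t
      by (simp add: matrix_vector_right_distrib matrix_vector_mult_scaleR_field)
    then have dAv: "DERIV (\<lambda>t. \<Sum>i\<in>UNIV. norm ((A *v (v + t *\<^sub>R w)) $ i) powr s) 0
        :> s * \<tau> powr (s - 2) * inner (A *v v) (A *v w)"
      using DERIV_sum_norm_powr[OF Av \<tau>] by simp
    have "DERIV (\<lambda>t. \<phi> (v + t *\<^sub>R w)) 0
        :> L powr s * (s / r * m powr (s / r - 1) * (r * inner v w)) - s * \<tau> powr (s - 2) * inner (A *v v) (A *v w)"
      unfolding \<phi>_def by (intro DERIV_diff DERIV_cmult dv dAv)
    then have "L powr s * (s / r * m powr (s / r - 1) * (r * inner v w)) - s * \<tau> powr (s - 2) * inner (A *v v) (A *v w) = 0"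
      by (rule DERIV_local_min[of _ _ _ 1]) (use \<phi>_min in simp_all)
    then show ?thesis
      using r s \<tau> by (simp add: field_simps)
  qed
  then show ?thesis by blast
qed

lemma E_inf1_imp_exists_flat:
  fixes A :: "('a::{euclidean_space,real_normed_field})^'m^'n"
  assumes p: "1 \<le> p" "p < \<infinity>" and q: "1 < q" and E: "E_inf1 p q A"
  shows "\<exists>v. (\<forall>j. norm (v $ j) = 1) \<and> (\<forall>i. norm ((A *v v) $ i)
    = real CARD('m) powr inv_exp p * real CARD('n) powr (- inv_exp q) * op_norm p q A)"
proof (cases "op_norm p q A = 0")
  case True
  then have "A *v x = 0" for x
    by (rule mv_eq_0_if_op_norm_eq_0[OF p(1) less_imp_le[OF q]])
  then show ?thesis
    by (intro exI[of _ "vec 1"]) (simp add: True)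
next
  case False
  then have K: "0 < op_norm p q A"
    using op_norm_nonneg[OF p(1) less_imp_le[OF q], of A] by simp
  obtain p' where p': "p = ereal p'" "1 \<le> p'"
    using p by (cases p) auto
  obtain v where cube: "\<And>j. norm (v $ j) \<le> 1" and max: "op_norm \<infinity> 1 A \<le> lp_norm 1 (A *v v)"
    using exists_cube_maximiser by blast
  have "op_norm \<infinity> 1 A
      = real CARD('m) powr inv_exp p * real CARD('n) powr (1 - inv_exp q) * op_norm p q A"
    using E p q unfolding E_inf1_def by (auto elim!: allE[of _ \<infinity>] allE[of _ 1])
  then show ?thesis
    using cube_maximiser_flat[OF p' q K _ cube max] by blast
qed

lemma E_inf1_imp_flat_stationary:
  fixes A :: "('a::{euclidean_space,real_normed_field})^'m^'n"
  assumes p: "1 \<le> p" "p < \<infinity>" and q: "1 < q" and E: "E_inf1 p q A"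
  shows "\<exists>v. (\<forall>j. norm (v $ j) = 1)
    \<and> (\<forall>i. norm ((A *v v) $ i)
        = real CARD('m) powr inv_exp p * real CARD('n) powr (- inv_exp q) * op_norm p q A)
    \<and> (\<exists>c. \<forall>w. inner (A *v v) (A *v w) = c * inner v w)"
proof -
  obtain v where v: "\<And>j. norm (v $ j) = 1"
    and Av: "\<And>i. norm ((A *v v) $ i)
      = real CARD('m) powr inv_exp p * real CARD('n) powr (- inv_exp q) * op_norm p q A"
    using E_inf1_imp_exists_flat[OF p q E] by blast
  obtain r where r: "p < ereal r"
    using ereal_dense2[OF p(2)] by blast
  obtain s where s: "1 < ereal s" "ereal s < q"
    using ereal_dense2[OF q] by blast
  have r1: "1 \<le> ereal r" and s1: "1 \<le> ereal s"
    using order_trans[OF p(1) less_imp_le[OF r]] less_imp_le[OF s(1)] by auto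
  have "op_norm (ereal r) (ereal s) A = real CARD('m) powr (inv_exp p - inv_exp (ereal r))
      * real CARD('n) powr (inv_exp (ereal s) - inv_exp q) * op_norm p q A"
    using E r s unfolding E_inf1_def by auto
  then have attained: "lp_norm (ereal s) (A *v v) = op_norm (ereal r) (ereal s) A * lp_norm (ereal r) v"
    using lp_norm_mv_flat[OF r1 s1 v Av] by simp
  have "\<exists>c. \<forall>w. inner (A *v v) (A *v w) = c * inner v w"
  proof (cases "op_norm p q A = 0")
    case True
    then show ?thesis
      using mv_eq_0_if_op_norm_eq_0[OF p(1) less_imp_le[OF q] True] by simp
  next
    case False
    then have "0 < op_norm p q A"
      using op_norm_nonneg[OF p(1) less_imp_le[OF q], of A] by simp
    moreover have "1 < r" and "1 < s"
      using le_less_trans[OF p(1) r] s(1) by simp_all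
    ultimately show ?thesis
      using stationary_if_flat_attains[OF _ _ v Av _ _ lp_norm_mv_le_op_norm[OF r1 s1]]
        op_norm_nonneg[OF r1 s1, of A] attained by simp
  qed
  then show ?thesis
    using v Av by blast
qed

section \<open>Eigenvectors of the Gram matrix\<close>

text \<open>The hypothesis \<open>adj\<close> says that \<open>M\<close> is the Gram matrix \<open>A\<^sup>*A\<close> (with respect to the real
  inner product, which for complex vectors is \<open>Re \<langle>x, w\<rangle>\<close>), and \<open>ev\<close> extracts the real part of
  a scalar; this treats real and complex matrices at once.\<close>

lemma eigvec_if_stationary:
  fixes A :: "('a::{real_inner,real_normed_field})^'m^'n" and M :: "'a^'m^'m"
  assumes adj: "\<And>x w. inner (A *v x) (A *v w) = inner (M *v x) w"
    and stationary: "\<And>w. inner (A *v v) (A *v w) = c * inner v w"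
  shows "M *v v = of_real c *s v"
proof -
  have "inner (M *v v - c *\<^sub>R v) w = 0" for w
    using stationary[of w] adj[of v w] by (simp add: inner_diff_left)
  then have "M *v v = c *\<^sub>R v"
    by (metis inner_eq_zero_iff eq_iff_diff_eq_0)
  then show ?thesis
    by (simp add: vec_eq_iff of_real_def)
qed

lemma norm_mv_squared_if_eigvec:
  fixes A :: "('a::{real_inner,real_normed_field})^'m^'n" and M :: "'a^'m^'m"
  assumes adj: "\<And>x w. inner (A *v x) (A *v w) = inner (M *v x) w"
    and scal: "\<And>d (w :: 'a^'m). inner (d *s w) w = ev d * inner w w"
    and eig: "M *v w = d *s w"
  shows "(norm (A *v w))\<^sup>2 = ev d * (norm w)\<^sup>2"
  using adj[of w w] scal[of d w] eig by (simp add: power2_norm_eq_inner)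

lemma E_inf1_iff_flat_eigvec:
  fixes A :: "('a::{euclidean_space,real_normed_field})^'m^'n" and M :: "'a^'m^'m"
  assumes adj: "\<And>x w. inner (A *v x) (A *v w) = inner (M *v x) w"
    and p: "1 \<le> p" "p < \<infinity>" and q: "1 < q"
  shows "E_inf1 p q A \<longleftrightarrow>
    (\<exists>v. is_eigvec M v \<and> (\<forall>j. norm (v $ j) = 1) \<and>
      (\<exists>\<tau>. (\<forall>i. norm ((A *v v) $ i) = \<tau>) \<and>
        \<tau> = real CARD('m) powr (inv_exp p) * real CARD('n) powr (- inv_exp q) * op_norm p q A))"
proof
  assume "E_inf1 p q A"
  then obtain v c where v: "\<forall>j. norm (v $ j) = 1"
    and Av: "\<forall>i. norm ((A *v v) $ i)
      = real CARD('m) powr inv_exp p * real CARD('n) powr (- inv_exp q) * op_norm p q A"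
    and stationary: "\<forall>w. inner (A *v v) (A *v w) = c * inner v w"
    using E_inf1_imp_flat_stationary[OF p q] by blast
  have "is_eigvec M v"
    unfolding is_eigvec_def
    using v eigvec_if_stationary[OF adj] stationary by (metis norm_zero zero_index zero_neq_one)
  then show "\<exists>v. is_eigvec M v \<and> (\<forall>j. norm (v $ j) = 1) \<and>
      (\<exists>\<tau>. (\<forall>i. norm ((A *v v) $ i) = \<tau>) \<and>
        \<tau> = real CARD('m) powr (inv_exp p) * real CARD('n) powr (- inv_exp q) * op_norm p q A)"
    using v Av by blast
next
  assume "\<exists>v. is_eigvec M v \<and> (\<forall>j. norm (v $ j) = 1) \<and>
      (\<exists>\<tau>. (\<forall>i. norm ((A *v v) $ i) = \<tau>) \<and>
        \<tau> = real CARD('m) powr (inv_exp p) * real CARD('n) powr (- inv_exp q) * op_norm p q A)"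
  then show "E_inf1 p q A"
    using E_inf1_if_flat[OF p(1)] by blast
qed

lemma quadratic_nonneg_imp_linear_coeff_0:
  fixes b c :: real
  assumes "\<And>t. 0 \<le> b * t + c * t\<^sup>2"
  shows "b = 0"
proof -
  have "DERIV (\<lambda>t. b * t + c * t\<^sup>2) 0 :> b"
    by (auto intro!: derivative_eq_intros)
  then show ?thesis
    by (rule DERIV_local_min[of _ _ _ 1]) (simp_all add: assms)
qed

text \<open>The quadratic form \<open>K\<^sup>2\<parallel>x\<parallel>\<^sup>2 - \<parallel>f x\<parallel>\<^sup>2\<close> is nonnegative and vanishes
  at \<open>x\<^sub>0\<close>, so its polarisation vanishes at \<open>x\<^sub>0\<close>.\<close>
lemma inner_eq_if_norm_bound_attained:
  fixes f :: "'a::real_inner \<Rightarrow> 'b::real_inner"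
  assumes f: "linear f" and bound: "\<And>x. norm (f x) \<le> K * norm x"
    and attained: "norm (f x\<^sub>0) = K * norm x\<^sub>0"
  shows "inner (f x\<^sub>0) (f w) = K\<^sup>2 * inner x\<^sub>0 w"
proof -
  define b where "b = 2 * (K\<^sup>2 * inner x\<^sub>0 w - inner (f x\<^sub>0) (f w))"
  define c where "c = K\<^sup>2 * inner w w - inner (f w) (f w)"
  have "0 \<le> b * t + c * t\<^sup>2" for t
  proof -
    have "(norm (f (x\<^sub>0 + t *\<^sub>R w)))\<^sup>2 \<le> (K * norm (x\<^sub>0 + t *\<^sub>R w))\<^sup>2"
      using bound[of "x\<^sub>0 + t *\<^sub>R w"] by (simp add: power_mono)
    then have "inner (f x\<^sub>0 + t *\<^sub>R f w) (f x\<^sub>0 + t *\<^sub>R f w) \<le> K\<^sup>2 * inner (x\<^sub>0 + t *\<^sub>R w) (x\<^sub>0 + t *\<^sub>R w)"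
      using f by (simp add: power2_norm_eq_inner power_mult_distrib linear_add linear_scale)
    moreover have "inner (f x\<^sub>0) (f x\<^sub>0) = K\<^sup>2 * inner x\<^sub>0 x\<^sub>0"
      using attained by (simp flip: power2_norm_eq_inner add: power_mult_distrib)
    ultimately show ?thesis
      unfolding b_def c_def inner_add_scaleR_self by (simp add: algebra_simps)
  qed
  then have "b = 0"
    by (rule quadratic_nonneg_imp_linear_coeff_0)
  then show ?thesis
    by (simp add: b_def)
qed

lemma norm_mv_le_op_norm_2_2:
  fixes A :: "('a::real_normed_field)^'m^'n"
  shows "norm (A *v x) \<le> op_norm 2 2 A * norm x"
  using lp_norm_mv_le_op_norm[of 2 2 A x] unfolding lp_norm_2 by simp

lemma op_norm_2_2_attained:
  fixes A :: "('a::{euclidean_space,real_normed_field})^'m^'n"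
  shows "\<exists>x\<^sub>0. norm x\<^sub>0 = 1 \<and> norm (A *v x\<^sub>0) = op_norm 2 2 A"
proof -
  have "(vec 1 :: 'a^'m) \<noteq> 0"
    by (simp add: vec_eq_iff)
  then have "(1 / norm (vec 1 :: 'a^'m)) *\<^sub>R vec 1 \<in> sphere (0 :: 'a^'m) 1"
    by simp
  moreover have "continuous_on (sphere 0 1) (\<lambda>x. norm (A *v x))"
    by (intro continuous_on_norm linear_continuous_on matrix_vector_mul_bounded_linear)
  ultimately obtain x\<^sub>0 where x\<^sub>0: "x\<^sub>0 \<in> sphere 0 1"
    and max: "\<And>y. y \<in> sphere 0 1 \<Longrightarrow> norm (A *v y) \<le> norm (A *v x\<^sub>0)"
    using continuous_attains_sup[OF compact_sphere] by blast
  have "op_norm 2 2 A \<le> norm (A *v x\<^sub>0)"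
  proof (rule op_norm_le)
    fix x :: "'a^'m" assume "x \<noteq> 0"
    then have "norm (A *v ((1 / norm x) *\<^sub>R x)) \<le> norm (A *v x\<^sub>0)"
      by (intro max) simp
    then show "lp_norm 2 (A *v x) \<le> norm (A *v x\<^sub>0) * lp_norm 2 x"
      using \<open>x \<noteq> 0\<close> unfolding lp_norm_2
      by (simp add: matrix_vector_mult_scaleR_field divide_le_eq mult.commute)
  qed simp
  then have "norm (A *v x\<^sub>0) = op_norm 2 2 A"
    using norm_mv_le_op_norm_2_2[of A x\<^sub>0] x\<^sub>0 by simp
  then show ?thesis
    using x\<^sub>0 by auto
qed

lemma exists_eigvec_op_norm_2_2_squared:
  fixes A :: "('a::{euclidean_space,real_normed_field})^'m^'n" and M :: "'a^'m^'m"
  assumes adj: "\<And>x w. inner (A *v x) (A *v w) = inner (M *v x) w"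
  shows "\<exists>x\<^sub>0. x\<^sub>0 \<noteq> 0 \<and> M *v x\<^sub>0 = of_real ((op_norm 2 2 A)\<^sup>2) *s x\<^sub>0"
proof -
  obtain x\<^sub>0 where x\<^sub>0: "norm x\<^sub>0 = 1" "norm (A *v x\<^sub>0) = op_norm 2 2 A"
    using op_norm_2_2_attained by blast
  then have "inner (A *v x\<^sub>0) (A *v w) = (op_norm 2 2 A)\<^sup>2 * inner x\<^sub>0 w" for w
    by (intro inner_eq_if_norm_bound_attained norm_mv_le_op_norm_2_2) simp_all
  then show ?thesis
    using eigvec_if_stationary[OF adj] x\<^sub>0(1) by (metis norm_zero zero_neq_one)
qed

lemma eigenvalue_le_op_norm_2_2_squared:
  fixes A :: "('a::{euclidean_space,real_normed_field})^'m^'n" and M :: "'a^'m^'m"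
  assumes adj: "\<And>x w. inner (A *v x) (A *v w) = inner (M *v x) w"
    and scal: "\<And>d (w :: 'a^'m). inner (d *s w) w = ev d * inner w w"
    and "w \<noteq> 0" "M *v w = d *s w"
  shows "ev d \<le> (op_norm 2 2 A)\<^sup>2"
proof -
  have "ev d * (norm w)\<^sup>2 = (norm (A *v w))\<^sup>2"
    using norm_mv_squared_if_eigvec[OF adj scal assms(4)] by simp
  also have "\<dots> \<le> (op_norm 2 2 A)\<^sup>2 * (norm w)\<^sup>2"
    using norm_mv_le_op_norm_2_2[of A w] by (simp add: power_mono flip: power_mult_distrib)
  finally show ?thesis
    using \<open>w \<noteq> 0\<close> by simp
qed

lemma top_eigenvalue_iff_op_norm_2_2_squared:
  fixes A :: "('a::{euclidean_space,real_normed_field})^'m^'n" and M :: "'a^'m^'m"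
  assumes adj: "\<And>x w. inner (A *v x) (A *v w) = inner (M *v x) w"
    and scal: "\<And>d (w :: 'a^'m). inner (d *s w) w = ev d * inner w w"
    and ev_of_real: "\<And>x. ev (of_real x) = x"
    and eig: "v \<noteq> 0" "M *v v = c *s v"
  shows "(\<forall>d w. w \<noteq> 0 \<and> M *v w = d *s w \<longrightarrow> ev d \<le> ev c) \<longleftrightarrow> ev c = (op_norm 2 2 A)\<^sup>2"
  using eigenvalue_le_op_norm_2_2_squared[OF adj scal] exists_eigvec_op_norm_2_2_squared[OF adj]
    eig ev_of_real by (metis order_antisym)

lemma flat_eigvec_level_iff:
  fixes A :: "('a::{euclidean_space,real_normed_field})^'m^'n" and M :: "'a^'m^'m"
  assumes adj: "\<And>x w. inner (A *v x) (A *v w) = inner (M *v x) w"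
    and scal: "\<And>d (w :: 'a^'m). inner (d *s w) w = ev d * inner w w"
    and eig: "M *v v = c *s v"
    and v: "\<And>j. norm (v $ j) = 1" and Av: "\<And>i. norm ((A *v v) $ i) = \<tau>"
  shows "\<tau> = real CARD('m) powr inv_exp 2 * real CARD('n) powr (- inv_exp 2) * op_norm 2 2 A
    \<longleftrightarrow> ev c = (op_norm 2 2 A)\<^sup>2"
proof -
  define K where "K = op_norm 2 2 A"
  define m where "m = real CARD('m)"
  define n where "n = real CARD('n)"
  have \<tau>: "0 \<le> \<tau>"
    using Av[of undefined] by (metis norm_ge_zero)
  have m: "0 < m" and n: "0 < n" and K: "0 \<le> K"
    unfolding m_def n_def K_def by (simp_all add: op_norm_nonneg)
  have "(norm v)\<^sup>2 = m" and "(norm (A *v v))\<^sup>2 = n * \<tau>\<^sup>2"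
    using lp_norm_flat[of 2 1 v] lp_norm_flat[of 2 \<tau> "A *v v"] v Av \<tau> unfolding lp_norm_2
    by (simp_all add: inv_exp_def powr_half_sqrt m_def n_def power_mult_distrib)
  then have n\<tau>: "n * \<tau>\<^sup>2 = ev c * m"
    using norm_mv_squared_if_eigvec[OF adj scal eig] by simp
  have "\<tau> = real CARD('m) powr inv_exp 2 * real CARD('n) powr (- inv_exp 2) * K
      \<longleftrightarrow> \<tau> = sqrt m / sqrt n * K"
    by (simp add: inv_exp_def powr_half_sqrt powr_minus_divide m_def n_def)
  also have "\<dots> \<longleftrightarrow> \<tau>\<^sup>2 = (sqrt m / sqrt n * K)\<^sup>2"
    using \<tau> K m n by (subst power2_eq_iff_nonneg) auto
  also have "(sqrt m / sqrt n * K)\<^sup>2 = m * K\<^sup>2 / n"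
    using m n by (simp add: power_mult_distrib power_divide)
  also have "\<tau>\<^sup>2 = m * K\<^sup>2 / n \<longleftrightarrow> n * \<tau>\<^sup>2 = m * K\<^sup>2"
    using n by (simp add: eq_divide_eq mult.commute)
  also have "\<dots> \<longleftrightarrow> ev c = K\<^sup>2"
    unfolding n\<tau> using m by simp
  finally show ?thesis
    unfolding K_def .
qed

lemma E_inf1_2_2_iff_top_flat_eigvec:
  fixes A :: "('a::{euclidean_space,real_normed_field})^'m^'n" and M :: "'a^'m^'m"
  assumes adj: "\<And>x w. inner (A *v x) (A *v w) = inner (M *v x) w"
    and scal: "\<And>d (w :: 'a^'m). inner (d *s w) w = ev d * inner w w"
    and ev_of_real: "\<And>x. ev (of_real x) = x"
  shows "E_inf1 2 2 A \<longleftrightarrow>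
    (\<exists>v c. v \<noteq> 0 \<and> M *v v = c *s v
      \<and> (\<forall>d w. w \<noteq> 0 \<and> M *v w = d *s w \<longrightarrow> ev d \<le> ev c)
      \<and> (\<forall>j. norm (v $ j) = 1) \<and> (\<exists>\<tau>. \<forall>i. norm ((A *v v) $ i) = \<tau>))"
proof -
  note top_iff = top_eigenvalue_iff_op_norm_2_2_squared[OF adj scal ev_of_real]
  note level_iff = flat_eigvec_level_iff[OF adj scal]
  have E: "E_inf1 2 2 A \<longleftrightarrow> (\<exists>v. is_eigvec M v \<and> (\<forall>j. norm (v $ j) = 1) \<and>
      (\<exists>\<tau>. (\<forall>i. norm ((A *v v) $ i) = \<tau>) \<and>
        \<tau> = real CARD('m) powr inv_exp 2 * real CARD('n) powr (- inv_exp 2) * op_norm 2 2 A))"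
    by (rule E_inf1_iff_flat_eigvec[OF adj]) simp_all
  show ?thesis
  proof
    assume "E_inf1 2 2 A"
    then obtain v c \<tau> where v0: "v \<noteq> 0" and eig: "M *v v = c *s v" and v: "\<forall>j. norm (v $ j) = 1"
      and Av: "\<forall>i. norm ((A *v v) $ i) = \<tau>"
      and \<tau>: "\<tau> = real CARD('m) powr inv_exp 2 * real CARD('n) powr (- inv_exp 2) * op_norm 2 2 A"
      unfolding E is_eigvec_def by blast
    have "\<forall>d w. w \<noteq> 0 \<and> M *v w = d *s w \<longrightarrow> ev d \<le> ev c"
      using top_iff[OF v0 eig] level_iff[of v c \<tau>] eig v Av \<tau> by simp
    then show "\<exists>v c. v \<noteq> 0 \<and> M *v v = c *s v
      \<and> (\<forall>d w. w \<noteq> 0 \<and> M *v w = d *s w \<longrightarrow> ev d \<le> ev c)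
      \<and> (\<forall>j. norm (v $ j) = 1) \<and> (\<exists>\<tau>. \<forall>i. norm ((A *v v) $ i) = \<tau>)"
      using v0 eig v Av by blast
  next
    assume "\<exists>v c. v \<noteq> 0 \<and> M *v v = c *s v
      \<and> (\<forall>d w. w \<noteq> 0 \<and> M *v w = d *s w \<longrightarrow> ev d \<le> ev c)
      \<and> (\<forall>j. norm (v $ j) = 1) \<and> (\<exists>\<tau>. \<forall>i. norm ((A *v v) $ i) = \<tau>)"
    then obtain v c \<tau> where v0: "v \<noteq> 0" and eig: "M *v v = c *s v"
      and top: "\<forall>d w. w \<noteq> 0 \<and> M *v w = d *s w \<longrightarrow> ev d \<le> ev c"
      and v: "\<forall>j. norm (v $ j) = 1" and Av: "\<forall>i. norm ((A *v v) $ i) = \<tau>"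
      by blast
    have "\<tau> = real CARD('m) powr inv_exp 2 * real CARD('n) powr (- inv_exp 2) * op_norm 2 2 A"
      using top_iff[OF v0 eig] level_iff[of v c \<tau>] top eig v Av by simp
    then show "E_inf1 2 2 A"
      unfolding E is_eigvec_def using v0 eig v Av by blast
  qed
qed

lemma inner_mv_transpose:
  fixes A :: "real^'m^'n"
  shows "inner (A *v x) (A *v w) = inner ((transpose A ** A) *v x) w"
proof -
  have "inner (A *v x) (A *v w) = inner ((A *v x) v* A) w"
    by (simp add: dot_lmul_matrix)
  also have "(A *v x) v* A = transpose A *v (A *v x)"
    using vector_transpose_matrix[of "A *v x" "transpose A"] by simp
  finally show ?thesis
    by (simp add: matrix_vector_mul_assoc)
qed

lemma inner_vector_smult_real: "inner (d *s w) (w :: real^'m) = d * inner w w"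
  by (simp add: inner_vec_def sum_distrib_left mult_ac)

lemma inner_mv_cadjoint:
  fixes A :: "complex^'m^'n"
  shows "inner (A *v x) (A *v w) = inner ((cadjoint A ** A) *v x) w"
proof -
  have cinner: "inner x y = Re (\<Sum>i\<in>UNIV. cnj (x $ i) * y $ i)" for x y :: "complex^'k"
    by (simp add: inner_vec_def inner_complex_def)
  have adjoint: "(\<Sum>k\<in>UNIV. cnj ((cadjoint A *v y) $ k) * w $ k) = (\<Sum>i\<in>UNIV. cnj (y $ i) * (A *v w) $ i)"
    for y
  proof -
    have "(\<Sum>k\<in>UNIV. cnj ((cadjoint A *v y) $ k) * w $ k)
        = (\<Sum>k\<in>UNIV. \<Sum>i\<in>UNIV. cnj (y $ i) * (A $ i $ k * w $ k))"
      by (simp add: matrix_vector_mult_def cadjoint_def sum_distrib_right sum_distrib_left mult_ac)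
    also have "\<dots> = (\<Sum>i\<in>UNIV. cnj (y $ i) * (A *v w) $ i)"
      by (subst sum.swap) (simp add: matrix_vector_mult_def sum_distrib_left)
    finally show ?thesis .
  qed
  show ?thesis
    unfolding cinner matrix_vector_mul_assoc[symmetric] adjoint ..
qed

lemma inner_vector_smult_complex: "inner (d *s w) (w :: complex^'m) = Re d * inner w w"
  by (simp add: inner_vec_def inner_complex_def sum_distrib_left algebra_simps)

theorem theorem6:
  shows
  \<comment> \<open>F = R\<close>
  "(\<forall>(A::real^'m^'n) (p::ereal) (q::ereal). 1 \<le> p \<and> p < \<infinity> \<and> 1 < q \<and> q \<le> \<infinity> \<longrightarrow>
      (E_inf1 p q A \<longleftrightarrow>
        (\<exists>v. is_eigvec (transpose A ** A) v \<and> (\<forall>j. norm (v $ j) = 1) \<and>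
             (\<exists>\<tau>. (\<forall>i. norm ((A *v v) $ i) = \<tau>) \<and>
                  \<tau> = real CARD('m) powr (inv_exp p) * real CARD('n) powr (- inv_exp q)
                       * op_norm p q A))))
   \<and> (\<forall>A::real^'m^'n.
      E_inf1 2 2 A \<longleftrightarrow>
        (\<exists>v c. v \<noteq> 0 \<and> (transpose A ** A) *v v = c *s v
             \<and> (\<forall>d w. w \<noteq> 0 \<and> (transpose A ** A) *v w = d *s w \<longrightarrow> d \<le> c)
             \<and> (\<forall>j. norm (v $ j) = 1) \<and> (\<exists>\<tau>. \<forall>i. norm ((A *v v) $ i) = \<tau>)))
   \<and>
  \<comment> \<open>F = C\<close>
   (\<forall>(A::complex^'m^'n) (p::ereal) (q::ereal). 1 \<le> p \<and> p < \<infinity> \<and> 1 < q \<and> q \<le> \<infinity> \<longrightarrow>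
      (E_inf1 p q A \<longleftrightarrow>
        (\<exists>v. is_eigvec (cadjoint A ** A) v \<and> (\<forall>j. norm (v $ j) = 1) \<and>
             (\<exists>\<tau>. (\<forall>i. norm ((A *v v) $ i) = \<tau>) \<and>
                  \<tau> = real CARD('m) powr (inv_exp p) * real CARD('n) powr (- inv_exp q)
                       * op_norm p q A))))
   \<and> (\<forall>A::complex^'m^'n.
      E_inf1 2 2 A \<longleftrightarrow>
        (\<exists>v c. v \<noteq> 0 \<and> (cadjoint A ** A) *v v = c *s v
             \<and> (\<forall>d w. w \<noteq> 0 \<and> (cadjoint A ** A) *v w = d *s w \<longrightarrow> Re d \<le> Re c)
             \<and> (\<forall>j. norm (v $ j) = 1) \<and> (\<exists>\<tau>. \<forall>i. norm ((A *v v) $ i) = \<tau>)))"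
  by (intro conjI allI impI
      E_inf1_iff_flat_eigvec[OF inner_mv_transpose] E_inf1_iff_flat_eigvec[OF inner_mv_cadjoint]
      E_inf1_2_2_iff_top_flat_eigvec[OF inner_mv_transpose inner_vector_smult_real]
      E_inf1_2_2_iff_top_flat_eigvec[OF inner_mv_cadjoint inner_vector_smult_complex]) auto

end
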